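(* Let $d\ge 2$, let $\mathbf f_t(z)=\frac{z^d+t}{z}\in\overline{\mathbb Q}(t)(z)$, and let $\mathbf c=\mathbf A/\mathbf B\in\overline{\mathbb Q}(t)$ with $\mathbf A,\mathbf B\in\overline{\mathbb Q}[t]$ coprime. If $\mathbf c(0)=0$, then $$\widehat h_{\mathbf f}(\mathbf c)=\frac{\deg(\mathbf f_t(\mathbf c(t)))}{d}=\frac{\deg(\mathbf f_t^2(\mathbf c(t)))}{d^2}.$$
   Context: For a rational function $g\in\overline{\mathbb Q}(t)$, $\deg(g)$ is the maximum of the degrees of numerator and denominator in lowest terms. $\widehat h_{\mathbf f}(\mathbf c)=\lim_{n\to\infty}\deg(\mathbf f_t^n(\mathbf c(t)))/d^n$, where $\mathbf f_t^n$ denotes the $n$-th iterate of $z\mapsto\mathbf f_t(z)$. The condition $\mathbf c(0)=0$ means $\mathbf A(0)=0$. *)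

theory Defs
  imports "HOL-Analysis.Analysis" "HOL-Computational_Algebra.Computational_Algebra" "HOL-Computational_Algebra.Field_as_Ring"
begin

text \<open>Rational functions in t over the complex numbers are elements of the fraction field
  of complex polynomials; the coefficients will be restricted to algebraic numbers.\<close>
type_synonym ratfun = "complex poly fract"

definition rdeg :: "ratfun \<Rightarrow> nat" where
  "rdeg g = (case quot_of_fract g of (p, q) \<Rightarrow> max (degree p) (degree q))"

definition tvar :: ratfun where
  "tvar = to_fract [:0, 1:]"

definition fmap :: "nat \<Rightarrow> ratfun \<Rightarrow> ratfun" where
  "fmap d z = (z ^ d + tvar) / z"

definition canonical_height :: "nat \<Rightarrow> ratfun \<Rightarrow> real" where
  "canonical_height d c = lim (\<lambda>n. real (rdeg ((fmap d ^^ n) c)) / real d ^ n)"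

end

theory Submission
  imports Defs
begin

text \<open>
  Write a rational function as P/Q in lowest terms. If P(0) is nonzero and deg Q < deg P, then
  f(P/Q) = (P^d + t Q^d) / (P Q^(d-1)) is again in lowest terms (a common factor divides P and
  t Q^d, but t does not divide P and P is prime to Q), satisfies the same two conditions, and has
  numerator of degree d deg P. So from such a point on, each iteration multiplies the degree by
  exactly d. If c(0) = 0, i.e. A = t A1, the first iteration cancels the factor t and gives
  (t^(d-1) A1^d + B^d) / (A1 B^(d-1)), which already satisfies both conditions. Hence
  deg f^n(c) = d^(n-1) deg f(c) for all n \<ge> 1. The algebraicity of the coefficients plays no role.
\<close>

lemma coprime_add_mult_iff:
  fixes a b k :: "'a::{idom,algebraic_semidom}"
  shows "coprime (a + b * k) b \<longleftrightarrow> coprime a b"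
  by (auto simp: coprime_def dvd_add_left_iff)

lemma degree_div_unit:
  fixes p u :: "'a::field poly"
  assumes "is_unit u"
  shows "degree (p div u) = degree p"
proof -
  obtain c where u: "u = [:c:]" and "c \<noteq> 0"
    using assms by (auto simp: is_unit_poly_iff) (metis dvd_0_left_iff one_neq_zero)
  have "p = u * (p div u)"
    using assms by (simp add: unit_imp_dvd)
  then have "p = smult c (p div u)"
    by (simp add: u)
  then show ?thesis
    using \<open>c \<noteq> 0\<close> by (metis degree_smult_eq)
qed

definition tpoly :: "'a::comm_ring_1 poly" where
  "tpoly = [:0, 1:]"

lemma tpoly_nonzero [simp]: "tpoly \<noteq> 0"
  and degree_tpoly [simp]: "degree tpoly = 1"
  and poly_tpoly [simp]: "poly tpoly x = x"
  by (simp_all add: tpoly_def)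

lemma tvar_eq_to_fract_tpoly: "tvar = to_fract tpoly"
  by (simp add: tvar_def tpoly_def)

lemma tpoly_dvd_iff: "tpoly dvd p \<longleftrightarrow> poly p 0 = 0"
  by (simp add: tpoly_def poly_eq_0_iff_dvd)

lemma coprime_tpoly_iff: "coprime tpoly (p :: 'a::field_gcd poly) \<longleftrightarrow> poly p 0 \<noteq> 0"
proof
  assume "coprime tpoly p"
  show "poly p 0 \<noteq> 0"
  proof
    assume "poly p 0 = 0"
    with \<open>coprime tpoly p\<close> have "is_unit tpoly"
      using coprime_common_divisor[of tpoly p tpoly] by (simp add: tpoly_dvd_iff)
    then show False
      by (auto simp: is_unit_poly_iff tpoly_def)
  qed
next
  assume "poly p 0 \<noteq> 0"
  then show "coprime tpoly p"
    unfolding tpoly_def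
    by (intro prime_elem_imp_coprime prime_elem_linear_field_poly) (simp_all add: poly_eq_0_iff_dvd)
qed

lemma to_fract_power: "to_fract (p ^ n) = to_fract p ^ n"
  by (induction n) auto

lemma rdeg_to_fract_div:
  fixes P Q :: "complex poly"
  assumes "coprime P Q" and "Q \<noteq> 0"
  shows "rdeg (to_fract P / to_fract Q) = max (degree P) (degree Q)"
proof -
  have "to_fract P / to_fract Q = quot_to_fract (P, Q)"
    by (simp add: quot_to_fract_def Fract_conv_to_fract)
  then have "quot_of_fract (to_fract P / to_fract Q) = (P div unit_factor Q, Q div unit_factor Q)"
    using assms by (simp add: quot_of_fract_quot_to_fract normalize_quot_def Let_def)
  moreover have "is_unit (unit_factor Q)"
    using assms(2) by simp
  ultimately show ?thesis
    by (simp add: rdeg_def degree_div_unit del: div_unit_factor)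
qed

lemma fmap_to_fract_div:
  fixes P Q :: "complex poly"
  assumes "P \<noteq> 0" and "Q \<noteq> 0"
  shows "fmap (Suc m) (to_fract P / to_fract Q)
           = to_fract (P ^ Suc m + tpoly * Q ^ Suc m) / to_fract (P * Q ^ m)"
  using assms by (simp add: fmap_def tvar_eq_to_fract_tpoly to_fract_power field_simps)

definition dominant_coprime_pair :: "'a::field_gcd poly \<Rightarrow> 'a poly \<Rightarrow> bool" where
  "dominant_coprime_pair P Q \<longleftrightarrow>
     coprime P Q \<and> Q \<noteq> 0 \<and> poly P 0 \<noteq> 0 \<and> degree Q < degree P"

lemma rdeg_dominant_coprime_pair:
  "dominant_coprime_pair P Q \<Longrightarrow> rdeg (to_fract P / to_fract Q) = degree P"
  by (simp add: dominant_coprime_pair_def rdeg_to_fract_div)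

lemma dominant_coprime_pair_step:
  fixes P Q :: "'a::field_gcd poly"
  assumes "m \<ge> 1" and "dominant_coprime_pair P Q"
  shows "dominant_coprime_pair (P ^ Suc m + tpoly * Q ^ Suc m) (P * Q ^ m)"
    and "degree (P ^ Suc m + tpoly * Q ^ Suc m) = Suc m * degree P"
proof -
  from assms(2) have coprime: "coprime P Q" and "Q \<noteq> 0" and P0: "poly P 0 \<noteq> 0"
    and less: "degree Q < degree P"
    by (auto simp: dominant_coprime_pair_def)
  then have "P \<noteq> 0"
    by auto
  have "1 + Suc m * degree Q < Suc m * degree P"
    using less assms(1) mult_le_mono2[of "Suc (degree Q)" "degree P" "Suc m"] by simp
  then show degree: "degree (P ^ Suc m + tpoly * Q ^ Suc m) = Suc m * degree P"
    using \<open>P \<noteq> 0\<close> \<open>Q \<noteq> 0\<close>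
    by (subst degree_add_eq_left) (simp_all add: degree_mult_eq degree_power_eq del: power_Suc)
  have "degree (P * Q ^ m) < Suc m * degree P"
    using \<open>P \<noteq> 0\<close> \<open>Q \<noteq> 0\<close> less assms(1) by (simp add: degree_mult_eq degree_power_eq)
  moreover have "coprime (P ^ Suc m + tpoly * Q ^ Suc m) P"
  proof -
    have "coprime tpoly P"
      using P0 by (simp add: coprime_tpoly_iff)
    then have "coprime (tpoly * Q ^ Suc m) P"
      using coprime by (simp add: coprime_commute)
    then show ?thesis
      using coprime_add_mult_iff[of "tpoly * Q ^ Suc m" P "P ^ m"] by (simp add: algebra_simps)
  qed
  moreover have "coprime (P ^ Suc m + tpoly * Q ^ Suc m) Q"
    using coprime_add_mult_iff[of "P ^ Suc m" Q "tpoly * Q ^ m"] coprime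
    by (simp add: algebra_simps)
  ultimately show "dominant_coprime_pair (P ^ Suc m + tpoly * Q ^ Suc m) (P * Q ^ m)"
    using degree P0 \<open>P \<noteq> 0\<close> \<open>Q \<noteq> 0\<close> by (simp add: dominant_coprime_pair_def)
qed

lemma rdeg_fmap_iterate_dominant:
  fixes P Q :: "complex poly"
  assumes "m \<ge> 1" and "dominant_coprime_pair P Q"
  shows "rdeg ((fmap (Suc m) ^^ n) (to_fract P / to_fract Q)) = Suc m ^ n * degree P"
  using assms(2)
proof (induction n arbitrary: P Q)
  case 0
  then show ?case
    by (simp add: rdeg_dominant_coprime_pair)
next
  case (Suc n)
  then have "P \<noteq> 0" and "Q \<noteq> 0"
    by (auto simp: dominant_coprime_pair_def)
  then show ?case
    using Suc.IH[OF dominant_coprime_pair_step(1)[OF assms(1) Suc.prems]]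
      dominant_coprime_pair_step(2)[OF assms(1) Suc.prems]
    by (simp add: funpow_Suc_right fmap_to_fract_div algebra_simps del: funpow.simps)
qed

lemma dominant_coprime_pair_first_step:
  fixes A B :: "'a::field_gcd poly"
  assumes "m \<ge> 1" and "A \<noteq> 0" and "B \<noteq> 0" and "coprime A B" and "poly B 0 \<noteq> 0"
  shows "dominant_coprime_pair (tpoly ^ m * A ^ Suc m + B ^ Suc m) (A * B ^ m)"
proof -
  let ?N = "tpoly ^ m * A ^ Suc m + B ^ Suc m"
  have deg_left: "degree (tpoly ^ m * A ^ Suc m) = m + Suc m * degree A"
    using assms(2) by (simp add: degree_mult_eq degree_power_eq del: power_Suc)
  have deg_right: "degree (B ^ Suc m) = Suc m * degree B"
    using assms(3) by (simp add: degree_power_eq del: power_Suc)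
  have deg_D: "degree (A * B ^ m) = degree A + m * degree B"
    using assms(2,3) by (simp add: degree_mult_eq degree_power_eq)
  have "degree (A * B ^ m) < degree ?N"
  proof (cases "degree B \<le> degree A")
    case True
    then have "degree ?N = m + degree A + m * degree A"
      using deg_left deg_right assms(1) mult_le_mono2[of "degree B" "degree A" "Suc m"]
      by (subst degree_add_eq_left) simp_all
    moreover have "m * degree B \<le> m * degree A"
      using True by (rule mult_le_mono2)
    ultimately show ?thesis
      using deg_D assms(1) by linarith
  next
    case False
    then have "degree ?N = Suc m * degree B"
      using deg_left deg_right mult_le_mono2[of "Suc (degree A)" "degree B" "Suc m"]
      by (subst degree_add_eq_right) simp_all
    then show ?thesis
      using deg_D False by simp
  qed
  moreover have "coprime ?N A"
    using coprime_add_mult_iff[of "B ^ Suc m" A "tpoly ^ m * A ^ m"] assms(4)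
    by (simp add: coprime_commute algebra_simps)
  moreover have "coprime ?N B"
  proof -
    have "coprime tpoly B"
      using assms(5) by (simp add: coprime_tpoly_iff)
    then have "coprime (tpoly ^ m * A ^ Suc m) B"
      using assms(4) by simp
    then show ?thesis
      using coprime_add_mult_iff[of "tpoly ^ m * A ^ Suc m" B "B ^ m"] by (simp add: algebra_simps)
  qed
  moreover have "poly ?N 0 \<noteq> 0"
    using assms(1,5) by (simp add: zero_power)
  ultimately show ?thesis
    using assms(2,3) by (simp add: dominant_coprime_pair_def)
qed

lemma rdeg_fmap_iterate:
  fixes A B :: "complex poly"
  assumes "d \<ge> 2" and "B \<noteq> 0" and "coprime A B" and "poly A 0 = 0"
  shows "rdeg ((fmap d ^^ Suc n) (to_fract A / to_fract B))
           = d ^ n * rdeg (fmap d (to_fract A / to_fract B))"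
proof (cases "A = 0")
  case True
  have "fmap d 0 = 0"
    by (simp add: fmap_def)
  then have "(fmap d ^^ k) 0 = 0" for k
    by (induction k) simp_all
  then show ?thesis
    using True \<open>fmap d 0 = 0\<close> by (simp add: rdeg_def)
next
  case False
  obtain m where d: "d = Suc m" and "m \<ge> 1"
    using assms(1) by (cases d) auto
  have "tpoly dvd A"
    using assms(4) by (simp add: tpoly_dvd_iff)
  then obtain A\<^sub>1 where A: "A = tpoly * A\<^sub>1"
    by (rule dvdE)
  with False assms(3) have "A\<^sub>1 \<noteq> 0" and "coprime A\<^sub>1 B" and "poly B 0 \<noteq> 0"
    by (auto simp: coprime_tpoly_iff)
  define N D where "N = tpoly ^ m * A\<^sub>1 ^ Suc m + B ^ Suc m" and "D = A\<^sub>1 * B ^ m"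
  have pair: "dominant_coprime_pair N D"
    unfolding N_def D_def
    by (rule dominant_coprime_pair_first_step) fact+
  have "fmap d (to_fract A / to_fract B)
          = to_fract (A ^ Suc m + tpoly * B ^ Suc m) / to_fract (A * B ^ m)"
    using False assms(2) by (simp add: d fmap_to_fract_div)
  also have "A ^ Suc m + tpoly * B ^ Suc m = tpoly * N"
    by (simp add: A N_def power_mult_distrib algebra_simps)
  also have "A * B ^ m = tpoly * D"
    by (simp add: A D_def)
  also have "to_fract (tpoly * N) / to_fract (tpoly * D) = to_fract N / to_fract D"
    by simp
  finally have first: "fmap d (to_fract A / to_fract B) = to_fract N / to_fract D" .
  show ?thesis
    using rdeg_fmap_iterate_dominant[OF \<open>m \<ge> 1\<close> pair, of n]
      rdeg_fmap_iterate_dominant[OF \<open>m \<ge> 1\<close> pair, of 0] first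
    unfolding d by (simp add: funpow_Suc_right del: funpow.simps)
qed

theorem proposition3p3:
  fixes d :: nat and A B :: "complex poly"
  assumes "d \<ge> 2"
    and "\<forall>i. algebraic (coeff A i)" and "\<forall>i. algebraic (coeff B i)"
    and "B \<noteq> 0" and "coprime A B"
    and "poly A 0 = 0"
  shows "((\<lambda>n. real (rdeg ((fmap d ^^ n) (to_fract A / to_fract B))) / real d ^ n)
            \<longlonglongrightarrow> real (rdeg (fmap d (to_fract A / to_fract B))) / real d)
    \<and> canonical_height d (to_fract A / to_fract B)
            = real (rdeg (fmap d (to_fract A / to_fract B))) / real d
    \<and> real (rdeg (fmap d (to_fract A / to_fract B))) / real d
            = real (rdeg ((fmap d ^^ 2) (to_fract A / to_fract B))) / real d ^ 2"
proof -
  define c where "c = to_fract A / to_fract B"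
  have iterate: "rdeg ((fmap d ^^ Suc n) c) = d ^ n * rdeg (fmap d c)" for n
    unfolding c_def using rdeg_fmap_iterate[OF assms(1,4,5,6)] .
  have "d > 0"
    using assms(1) by simp
  then have normalized: "real (rdeg ((fmap d ^^ Suc n) c)) / real d ^ Suc n = real (rdeg (fmap d c)) / real d" for n
    by (simp add: iterate del: funpow.simps)
  have lim: "(\<lambda>n. real (rdeg ((fmap d ^^ n) c)) / real d ^ n) \<longlonglongrightarrow> real (rdeg (fmap d c)) / real d"
    by (rule LIMSEQ_imp_Suc) (simp only: normalized tendsto_const)
  show ?thesis
    using lim limI[OF lim] normalized[of 1]
    by (simp add: canonical_height_def c_def numeral_2_eq_2)
qed

end
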